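(* Let $n\ge 2$, $\ell\ge 1$, and let $\mathcal{L}\in\mathcal{A}(n,n-2,\ell)$. For every $1\le j\le n$, the word $W_j=\mathbf{1}-\mathbf{e}_j$ can be covered only by a codeword of the form $\mathbf{1}-\lambda\mathbf{e}_j$ with $\lambda$ an integer, $1\le\lambda\le\ell+1$.
   Context: $\mathcal{S}(n,t,\ell)=\{\mathcal{E}\in\mathbb{Z}^n: 0\le\varepsilon_i\le\ell \text{ for all } i,\ w_H(\mathcal{E})\le t\}$, with $w_H$ the number of nonzero coordinates. A lattice here is the set of integer combinations of $n$ linearly independent vectors of $\mathbb{Z}^n$. $\mathcal{A}(n,t,\ell)$ is the set of lattices $\mathcal{L}\subseteq\mathbb{Z}^n$ such that the translates $X+\mathcal{S}(n,t,\ell)$, $X\in\mathcal{L}$, are pairwise disjoint; elements of $\mathcal{L}$ are codewords. A codeword $X$ covers $Y\in\mathbb{Z}^n$ if $Y=X+\mathcal{E}$ for some $\mathcal{E}\in\mathcal{S}(n,n-2,\ell)$. $\mathbf{1}$ is the all-one vector and $\mathbf{e}_j$ the $j$-th unit vector. *)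

theory Defs
  imports "HOL-Analysis.Analysis"
begin

text \<open>Vectors of Z^n are represented as int ^ 'n, with n = CARD('n).\<close>

definition hamming_weight :: "int ^ 'n \<Rightarrow> nat" where
  "hamming_weight x = card {i. x $ i \<noteq> 0}"

definition err_set :: "nat \<Rightarrow> int \<Rightarrow> (int ^ 'n) set" where
  "err_set t l = {E. (\<forall>i. 0 \<le> E $ i \<and> E $ i \<le> l) \<and> hamming_weight E \<le> t}"

definition is_lattice :: "(int ^ 'n) set \<Rightarrow> bool" where
  "is_lattice L \<longleftrightarrow> (\<exists>B :: 'n \<Rightarrow> int ^ 'n.
      (\<forall>c :: 'n \<Rightarrow> int. (\<Sum>i\<in>UNIV. c i *s B i) = 0 \<longrightarrow> (\<forall>i. c i = 0)) \<and>
      L = {\<Sum>i\<in>UNIV. c i *s B i | c :: 'n \<Rightarrow> int. True})"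

definition lattice_packings :: "nat \<Rightarrow> int \<Rightarrow> (int ^ 'n) set set" where
  "lattice_packings t l = {L. is_lattice L \<and>
      (\<forall>X\<in>L. \<forall>Y\<in>L. X \<noteq> Y \<longrightarrow>
         ((\<lambda>E. X + E) ` err_set t l) \<inter> ((\<lambda>E. Y + E) ` err_set t l) = {})}"

definition covers :: "int \<Rightarrow> int ^ 'n \<Rightarrow> int ^ 'n \<Rightarrow> bool" where
  "covers l X Y \<longleftrightarrow> (\<exists>E \<in> err_set (CARD('n) - 2) l. Y = X + E)"

definition unit_vec :: "'n \<Rightarrow> int ^ 'n" where
  "unit_vec j = (\<chi> i. if i = j then 1 else 0)"

end

theory Submission
  imports Defs
begin

text \<open>Write \<open>W = 1 - e\<^sub>j = X + E\<close>. If \<open>E\<close> had a nonzero entry at some \<open>k \<noteq> j\<close>, the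
  positive part \<open>X\<^sup>+\<close> of \<open>X\<close> would be a 0/1 word vanishing at \<open>j\<close> and \<open>k\<close>, hence an error
  of weight at most \<open>n - 2\<close> added to the codeword \<open>0\<close>; on the other hand \<open>X\<^sup>+ = X + X\<^sup>-\<close>
  with \<open>0 \<le> X\<^sup>- \<le> E\<close>, so \<open>X\<^sup>+\<close> also lies in the translate at \<open>X\<close>. Since \<open>X \<noteq> 0\<close>
  (otherwise \<open>E = W\<close> has weight \<open>n - 1\<close>), this contradicts the packing property. Hence \<open>E\<close>
  is supported on \<open>j\<close> and \<open>X = 1 - (1 + E\<^sub>j) e\<^sub>j\<close>.\<close>

lemma mem_err_set_iff:
  "E \<in> err_set t l \<longleftrightarrow> (\<forall>i. 0 \<le> E $ i \<and> E $ i \<le> l) \<and> card {i. E $ i \<noteq> 0} \<le> t"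
  by (simp add: err_set_def hamming_weight_def)

lemma zero_in_lattice:
  fixes L :: "(int ^ 'n) set"
  assumes "is_lattice L"
  shows "0 \<in> L"
proof -
  obtain B :: "'n \<Rightarrow> int ^ 'n" where L: "L = {\<Sum>i\<in>UNIV. c i *s B i | c. True}"
    using assms unfolding is_lattice_def by blast
  show ?thesis unfolding L by (intro CollectI exI[of _ "\<lambda>_. 0"]) simp
qed

lemma lattice_packing_eqI:
  assumes "L \<in> lattice_packings t l" "X \<in> L" "Y \<in> L"
    and "E \<in> err_set t l" "F \<in> err_set t l" "X + E = Y + F"
  shows "X = Y"
  using assms unfolding lattice_packings_def by blast

lemma neg_part_mem_err_set:
  assumes "E \<in> err_set t l" and "\<And>i. 0 \<le> X $ i + E $ i"
  shows "(\<chi> i. max 0 (- X $ i)) \<in> err_set t l"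
proof -
  have E: "\<forall>i. 0 \<le> E $ i \<and> E $ i \<le> l" "card {i. E $ i \<noteq> 0} \<le> t"
    using assms(1) by (simp_all add: mem_err_set_iff)
  have "{i. max 0 (- X $ i) \<noteq> 0} \<subseteq> {i. E $ i \<noteq> 0}"
  proof
    fix i assume "i \<in> {i. max 0 (- X $ i) \<noteq> 0}"
    then show "i \<in> {i. E $ i \<noteq> 0}"
      using assms(2)[of i] by (auto simp: max_def split: if_splits)
  qed
  then have "card {i. max 0 (- X $ i) \<noteq> 0} \<le> t"
    using E(2) card_mono[OF finite] order_trans by blast
  moreover have "\<forall>i. 0 \<le> max 0 (- X $ i) \<and> max 0 (- X $ i) \<le> l"
    using E(1) assms(2) by (smt (verit))
  ultimately show ?thesis by (simp add: mem_err_set_iff)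
qed

lemma card_support_le_if_two_zeros:
  fixes x :: "int ^ 'n"
  assumes "j \<noteq> k" "x $ j = 0" "x $ k = 0"
  shows "card {i. x $ i \<noteq> 0} \<le> CARD('n) - 2"
proof -
  have "{i. x $ i \<noteq> 0} \<subseteq> UNIV - {j, k}" using assms by auto
  then have "card {i. x $ i \<noteq> 0} \<le> card (UNIV - {j, k})" by (simp add: card_mono)
  also have "\<dots> = CARD('n) - 2" using assms(1) by (simp add: card_Diff_subset)
  finally show ?thesis .
qed

lemma unit_vec_nth [simp]: "unit_vec j $ i = (if i = j then 1 else 0)"
  by (simp add: unit_vec_def)

lemma nth_eq_of_add_eq_one_minus_unit_vec:
  fixes X E :: "int ^ 'n"
  assumes "X + E = 1 - unit_vec j"
  shows "X $ i = (if i = j then 0 else 1) - E $ i"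
proof -
  have "X $ i + E $ i = (if i = j then 0 else 1)"
    using arg_cong[OF assms, of "\<lambda>v. v $ i"] by simp
  then show ?thesis by linarith
qed

lemma card_support_one_minus_unit_vec:
  "card {i. (1 - unit_vec j :: int ^ 'n) $ i \<noteq> 0} = CARD('n) - 1"
proof -
  have "{i. (1 - unit_vec j :: int ^ 'n) $ i \<noteq> 0} = UNIV - {j}"
    by auto
  then show ?thesis by (simp add: card_Diff_subset)
qed

lemma cover_of_one_minus_unit_vec_error_at_j:
  fixes X E :: "int ^ 'n"
  assumes n: "CARD('n) \<ge> 2" and l: "l \<ge> 1"
    and L: "L \<in> lattice_packings (CARD('n) - 2) l" and X: "X \<in> L"
    and E: "E \<in> err_set (CARD('n) - 2) l" and W: "X + E = 1 - unit_vec j"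
    and k: "k \<noteq> j"
  shows "E $ k = 0"
proof (rule ccontr)
  assume Ek: "E $ k \<noteq> 0"
  have E_bounds: "\<And>i. 0 \<le> E $ i \<and> E $ i \<le> l"
    using E by (simp add: mem_err_set_iff)
  have X_i: "\<And>i. X $ i = (if i = j then 0 else 1) - E $ i"
    using W by (rule nth_eq_of_add_eq_one_minus_unit_vec)
  define P where "P = (\<chi> i. max (X $ i) 0)"
  define N where "N = (\<chi> i. max 0 (- X $ i))"
  have N: "N \<in> err_set (CARD('n) - 2) l"
    unfolding N_def using E X_i E_bounds
    by (intro neg_part_mem_err_set) (auto simp: vector_add_component)
  have "P $ j = 0" "P $ k = 0"
    using X_i[of j] X_i[of k] E_bounds[of j] E_bounds[of k] Ek k by (auto simp: P_def)
  then have "card {i. P $ i \<noteq> 0} \<le> CARD('n) - 2"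
    using card_support_le_if_two_zeros k by metis
  moreover have "0 \<le> P $ i \<and> P $ i \<le> l" for i
    using X_i[of i] E_bounds[of i] l by (auto simp: P_def)
  ultimately have P: "P \<in> err_set (CARD('n) - 2) l" by (simp add: mem_err_set_iff)
  have "X + N = 0 + P" by (simp add: vec_eq_iff P_def N_def max_def)
  moreover have "is_lattice L" using L by (simp add: lattice_packings_def)
  ultimately have "X = 0"
    using lattice_packing_eqI[OF L X zero_in_lattice N P] by simp
  then have "E = 1 - unit_vec j" using W by simp
  then have "CARD('n) - 1 \<le> CARD('n) - 2"
    using E card_support_one_minus_unit_vec[of j] by (simp add: mem_err_set_iff)
  then show False using n by linarith
qed

theorem mainTheorem16:
  fixes L :: "(int ^ 'n) set" and l :: int and j :: 'n and X :: "int ^ 'n"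
  assumes "CARD('n) \<ge> 2" and "l \<ge> 1"
    and "L \<in> lattice_packings (CARD('n) - 2) l"
    and "X \<in> L"
    and "covers l X (1 - unit_vec j)"
  shows "\<exists>lam::int. 1 \<le> lam \<and> lam \<le> l + 1 \<and> X = 1 - lam *s unit_vec j"
proof -
  obtain E where E: "E \<in> err_set (CARD('n) - 2) l" and W: "X + E = 1 - unit_vec j"
    using assms(5) unfolding covers_def by metis
  have off_j: "\<And>k. k \<noteq> j \<Longrightarrow> E $ k = 0"
    using cover_of_one_minus_unit_vec_error_at_j[OF assms(1-4) E W] .
  have "X $ i = (1 - (1 + E $ j) *s unit_vec j) $ i" for i
    using nth_eq_of_add_eq_one_minus_unit_vec[OF W, of i] off_j[of i]
    by (cases "i = j") simp_all
  then have "X = 1 - (1 + E $ j) *s unit_vec j"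
    by (simp add: vec_eq_iff)
  moreover have "0 \<le> E $ j \<and> E $ j \<le> l"
    using E by (simp add: mem_err_set_iff)
  ultimately show ?thesis by (intro exI[of _ "1 + E $ j"]) auto
qed

end
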